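(* Let $V$ be a vertex operator algebra of CFT type and $M=\bigoplus_{n\ge0}M(n)$ an admissible $V$-module strongly generated by $W\subseteq M$. Then $\mathrm{gr}\,A(M)$ is generated as a $\mathrm{gr}\,A(V)$-module by $\psi(\{w+C_2(M):w\in W\})$. In particular, if $M$ is strongly finitely generated, then $\mathrm{gr}\,A(M)$ is a finitely generated $\mathrm{gr}\,A(V)$-module.
   Context: $V_0=\mathbb{C}\mathbf{1}$, $V_+=\bigoplus_{n\ge1}V_n$, $Y_M(a,z)=\sum_na_nz^{-n-1}$. $M$ is strongly generated by $W$ if it is spanned by $a^1_{-n_1}\cdots a^k_{-n_k}w$ with $k\ge0$, $a^i\in V_+$ homogeneous, $n_i\ge1$, $w\in W$; strongly finitely generated means strongly generated by a finite set. $C_2(M)=\mathrm{span}\{a_{-2}v:a\in V,v\in M\}$. Zhu's algebra $A(V)=V/O(V)$ (product $a\ast b=\mathrm{Res}_zY(a,z)b\frac{(1+z)^{\mathrm{wt} a}}{z}$) is filtered by $A(V)_n=$ image of $\bigoplus_{i\le n}V_i$. $A(M)=M/O(M)$, $O(M)$ spanned by $\mathrm{Res}_zY_M(a,z)v\frac{(1+z)^{\mathrm{wt} a}}{z^2}$, is an $A(V)$-bimodule ($a\ast v=\mathrm{Res}_zY_M(a,z)v\frac{(1+z)^{\mathrm{wt} a}}{z}$, $v\ast a=\mathrm{Res}_zY_M(a,z)v\frac{(1+z)^{\mathrm{wt} a-1}}{z}$), filtered by $A(M)_n=$ image of $\bigoplus_{i=0}^nM(i)$; $\mathrm{gr}\,A(M)=\bigoplus_nA(M)_n/A(M)_{n-1}$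 is a graded $\mathrm{gr}\,A(V)$-module with $\bar a\ast\bar v=\overline{a_{-1}v}=\bar v\ast\bar a$. $\psi:M/C_2(M)\to\mathrm{gr}\,A(M)$ is the linear map $v+C_2(M)\mapsto\bar v\in A(M)_m/A(M)_{m-1}$ for $v\in M(m)$. *)

theory Defs
  imports Complex_Main
begin

text \<open>A nat-grading V = (direct sum over n) V_n is given by the family of component projections
proj n; V_n is the range of proj n.\<close>

definition nat_graded ::
  "(complex \<Rightarrow> 'v::ab_group_add \<Rightarrow> 'v) \<Rightarrow> (nat \<Rightarrow> 'v \<Rightarrow> 'v) \<Rightarrow> bool" where
  "nat_graded sc proj \<longleftrightarrow>
     vector_space sc \<and>
     (\<forall>n. Vector_Spaces.linear sc sc (proj n)) \<and>
     (\<forall>v. finite {n. proj n v \<noteq> 0}) \<and>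
     (\<forall>v. v = (\<Sum>n\<in>{n. proj n v \<noteq> 0}. proj n v)) \<and>
     (\<forall>m n v. proj m (proj n v) = (if m = n then proj n v else 0))"

definition hcomp :: "(nat \<Rightarrow> 'v \<Rightarrow> 'v) \<Rightarrow> nat \<Rightarrow> 'v set" where
  "hcomp proj n = {v. proj n v = v}"

definition Flt :: "(nat \<Rightarrow> 'v \<Rightarrow> 'v::zero) \<Rightarrow> nat \<Rightarrow> 'v set" where
  "Flt proj d = {v. \<forall>i\<ge>d. proj i v = 0}"

text \<open>Y a n b is the mode a_n b (Y(a,z) = sum a_n z^(-n-1)); YX a n x is the action of a_n on
a target space. The Jacobi identity is equivalent to the Borcherds identity, for all p q r:
  sum_i (p choose i) (a_(r+i) b)_(p+q-i) x
    = sum_i (-1)^i (r choose i) (a_(p+r-i) b_(q+i) x - (-1)^r b_(q+r-i) a_(p+i) x),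
where both sums are finite by truncation; we say the partial sums agree from some point on.\<close>

definition sgn_int :: "int \<Rightarrow> complex" where
  "sgn_int r = (if even r then 1 else -1)"

definition borcherds ::
  "(complex \<Rightarrow> 'x::ab_group_add \<Rightarrow> 'x) \<Rightarrow> ('v \<Rightarrow> int \<Rightarrow> 'v \<Rightarrow> 'v)
     \<Rightarrow> ('v \<Rightarrow> int \<Rightarrow> 'x \<Rightarrow> 'x) \<Rightarrow> bool" where
  "borcherds scX Y YX \<longleftrightarrow>
     (\<forall>a b x p q r. \<exists>N. \<forall>K\<ge>N.
        (\<Sum>i<K. scX ((of_int p :: complex) gchoose i) (YX (Y a (r + int i) b) (p + q - int i) x))
      = (\<Sum>i<K. scX ((-1) ^ i * ((of_int r :: complex) gchoose i))
            (YX a (p + r - int i) (YX b (q + int i) x)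
             - scX (sgn_int r) (YX b (q + r - int i) (YX a (p + int i) x)))))"

text \<open>Parameters: scalar multiplication scV, grading projections projV, modes Y, vacuum vac,
conformal vector om, central charge c.  L(n) = om_(n+1).\<close>

definition VOA ::
  "(complex \<Rightarrow> 'v::ab_group_add \<Rightarrow> 'v) \<Rightarrow> (nat \<Rightarrow> 'v \<Rightarrow> 'v) \<Rightarrow> ('v \<Rightarrow> int \<Rightarrow> 'v \<Rightarrow> 'v)
     \<Rightarrow> 'v \<Rightarrow> 'v \<Rightarrow> complex \<Rightarrow> bool" where
  "VOA scV projV Y vac om c \<longleftrightarrow>
     nat_graded scV projV \<and>
     (\<forall>n. \<exists>B. finite B \<and> hcomp projV n \<subseteq> module.span scV B) \<and>
     (\<forall>n b. Vector_Spaces.linear scV scV (\<lambda>a. Y a n b)) \<and>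
     (\<forall>a n. Vector_Spaces.linear scV scV (Y a n)) \<and>
     (\<forall>a b. \<exists>N. \<forall>n\<ge>N. Y a n b = 0) \<and>
     (\<forall>n v. Y vac n v = (if n = -1 then v else 0)) \<and>
     (\<forall>a. Y a (-1) vac = a) \<and>
     (\<forall>a n. n \<ge> 0 \<longrightarrow> Y a n vac = 0) \<and>
     borcherds scV Y Y \<and>
     om \<in> hcomp projV 2 \<and>
     (\<forall>m n v. Y om (m + 1) (Y om (n + 1) v) - Y om (n + 1) (Y om (m + 1) v)
        = scV (of_int (m - n)) (Y om (m + n + 1) v)
          + (if m + n = 0 then scV ((of_int (m ^ 3 - m) / 12) * c) v else 0)) \<and>
     (\<forall>n v. v \<in> hcomp projV n \<longrightarrow> Y om 1 v = scV (of_nat n) v) \<and>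
     (\<forall>a n v. Y (Y om 0 a) n v = scV (- of_int n) (Y a (n - 1) v))"

definition CFT_type ::
  "(complex \<Rightarrow> 'v::ab_group_add \<Rightarrow> 'v) \<Rightarrow> (nat \<Rightarrow> 'v \<Rightarrow> 'v) \<Rightarrow> 'v \<Rightarrow> bool" where
  "CFT_type scV projV vac \<longleftrightarrow> hcomp projV 0 = module.span scV {vac}"

definition admissible_module ::
  "(complex \<Rightarrow> 'v::ab_group_add \<Rightarrow> 'v) \<Rightarrow> (nat \<Rightarrow> 'v \<Rightarrow> 'v) \<Rightarrow> ('v \<Rightarrow> int \<Rightarrow> 'v \<Rightarrow> 'v) \<Rightarrow> 'v
   \<Rightarrow> (complex \<Rightarrow> 'm::ab_group_add \<Rightarrow> 'm) \<Rightarrow> (nat \<Rightarrow> 'm \<Rightarrow> 'm) \<Rightarrow> ('v \<Rightarrow> int \<Rightarrow> 'm \<Rightarrow> 'm)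
   \<Rightarrow> bool" where
  "admissible_module scV projV Y vac scM projM YM \<longleftrightarrow>
     nat_graded scM projM \<and>
     (\<forall>n w. Vector_Spaces.linear scV scM (\<lambda>a. YM a n w)) \<and>
     (\<forall>a n. Vector_Spaces.linear scM scM (YM a n)) \<and>
     (\<forall>a w. \<exists>N. \<forall>n\<ge>N. YM a n w = 0) \<and>
     (\<forall>n w. YM vac n w = (if n = -1 then w else 0)) \<and>
     borcherds scM Y YM \<and>
     (\<forall>n m k a w. a \<in> hcomp projV n \<longrightarrow> w \<in> hcomp projM m \<longrightarrow>
        (if int m + int n - k - 1 < 0 then YM a k w = 0
         else YM a k w \<in> hcomp projM (nat (int m + int n - k - 1))))"

inductive_set sgen_set ::
  "(nat \<Rightarrow> 'v \<Rightarrow> 'v) \<Rightarrow> ('v \<Rightarrow> int \<Rightarrow> 'm \<Rightarrow> 'm) \<Rightarrow> 'm set \<Rightarrow> 'm set"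
  for projV YM W where
    base: "w \<in> W \<Longrightarrow> w \<in> sgen_set projV YM W"
  | step: "v \<in> sgen_set projV YM W \<Longrightarrow> n \<ge> 1 \<Longrightarrow> a \<in> hcomp projV n \<Longrightarrow> k \<ge> 1
           \<Longrightarrow> YM a (- int k) v \<in> sgen_set projV YM W"

definition strongly_generated ::
  "(nat \<Rightarrow> 'v \<Rightarrow> 'v) \<Rightarrow> (complex \<Rightarrow> 'm::ab_group_add \<Rightarrow> 'm) \<Rightarrow> ('v \<Rightarrow> int \<Rightarrow> 'm \<Rightarrow> 'm)
     \<Rightarrow> 'm set \<Rightarrow> bool" where
  "strongly_generated projV scM YM W \<longleftrightarrow> module.span scM (sgen_set projV YM W) = UNIV"

definition strongly_fin_generated ::
  "(nat \<Rightarrow> 'v \<Rightarrow> 'v) \<Rightarrow> (complex \<Rightarrow> 'm::ab_group_add \<Rightarrow> 'm) \<Rightarrow> ('v \<Rightarrow> int \<Rightarrow> 'm \<Rightarrow> 'm) \<Rightarrow> bool"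
  where
  "strongly_fin_generated projV scM YM \<longleftrightarrow>
     (\<exists>W. finite W \<and> strongly_generated projV scM YM W)"

text \<open>Zhu's left action a * w = Res_z Y_M(a,z) w (1+z)^(wt a)/z for a homogeneous of weight n.\<close>
definition zhu_left ::
  "(complex \<Rightarrow> 'm::ab_group_add \<Rightarrow> 'm) \<Rightarrow> ('v \<Rightarrow> int \<Rightarrow> 'm \<Rightarrow> 'm) \<Rightarrow> nat \<Rightarrow> 'v \<Rightarrow> 'm \<Rightarrow> 'm" where
  "zhu_left scM YM n a w = (\<Sum>i\<le>n. scM (of_nat (n choose i)) (YM a (int i - 1) w))"

text \<open>O(M) = span of Res_z Y_M(a,z) w (1+z)^(wt a)/z^2, a homogeneous.\<close>
definition O_M ::
  "(nat \<Rightarrow> 'v \<Rightarrow> 'v) \<Rightarrow> (complex \<Rightarrow> 'm::ab_group_add \<Rightarrow> 'm) \<Rightarrow> ('v \<Rightarrow> int \<Rightarrow> 'm \<Rightarrow> 'm) \<Rightarrow> 'm set"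
  where
  "O_M projV scM YM = module.span scM
     {(\<Sum>i\<le>n. scM (of_nat (n choose i)) (YM a (int i - 2) w)) | n a w. a \<in> hcomp projV n}"

text \<open>A(M)_d is the image of Flt projM (d+1) in M/O(M), so
  gr_d A(M) = A(M)_d / A(M)_(d-1) = (Flt (d+1) + O(M)) / (Flt d + O(M)).
An element of gr A(M) = (direct sum over d) gr_d A(M) is represented by a finitely supported
family g with g d \<in> Flt (d+1); two representatives are equal iff they agree in each degree d
modulo Flt d + O(M).\<close>

definition grAM_carrier :: "(nat \<Rightarrow> 'm \<Rightarrow> 'm) \<Rightarrow> (nat \<Rightarrow> 'm::ab_group_add) set" where
  "grAM_carrier projM = {g. finite {d. g d \<noteq> 0} \<and> (\<forall>d. g d \<in> Flt projM (Suc d))}"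

definition grAM_low ::
  "(nat \<Rightarrow> 'v \<Rightarrow> 'v) \<Rightarrow> (complex \<Rightarrow> 'm::ab_group_add \<Rightarrow> 'm) \<Rightarrow> (nat \<Rightarrow> 'm \<Rightarrow> 'm)
     \<Rightarrow> ('v \<Rightarrow> int \<Rightarrow> 'm \<Rightarrow> 'm) \<Rightarrow> nat \<Rightarrow> 'm set" where
  "grAM_low projV scM projM YM d = {u + x | u x. u \<in> Flt projM d \<and> x \<in> O_M projV scM YM}"

text \<open>gr A(V) = (direct sum over n) gr_n A(V), and gr_n A(V) consists of the classes of
homogeneous a \<in> V_n.  The class of a \<in> V_n acts on gr A(M) by sending the class of w in
degree k to the class of a * w in degree n + k.  The gr A(V)-submodule generated by a set S of
elements of gr A(M) is therefore the set of finite sums of such products (n, a, h) with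
a \<in> V_n and h \<in> S (scalars can be absorbed into a).  grAM_generated_by S says that this
submodule is all of gr A(M).\<close>

definition grAV_act_family ::
  "(complex \<Rightarrow> 'm::ab_group_add \<Rightarrow> 'm) \<Rightarrow> ('v \<Rightarrow> int \<Rightarrow> 'm \<Rightarrow> 'm)
     \<Rightarrow> nat \<Rightarrow> 'v \<Rightarrow> (nat \<Rightarrow> 'm) \<Rightarrow> nat \<Rightarrow> 'm" where
  "grAV_act_family scM YM n a h d = (if n \<le> d then zhu_left scM YM n a (h (d - n)) else 0)"

definition grAM_generated_by ::
  "(nat \<Rightarrow> 'v \<Rightarrow> 'v) \<Rightarrow> (complex \<Rightarrow> 'm::ab_group_add \<Rightarrow> 'm) \<Rightarrow> (nat \<Rightarrow> 'm \<Rightarrow> 'm)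
     \<Rightarrow> ('v \<Rightarrow> int \<Rightarrow> 'm \<Rightarrow> 'm) \<Rightarrow> (nat \<Rightarrow> 'm) set \<Rightarrow> bool" where
  "grAM_generated_by projV scM projM YM S \<longleftrightarrow>
     (\<forall>g\<in>grAM_carrier projM. \<exists>xs :: (nat \<times> 'v \<times> (nat \<Rightarrow> 'm)) list.
        (\<forall>(n, a, h)\<in>set xs. a \<in> hcomp projV n \<and> h \<in> S) \<and>
        (\<forall>d. g d - (\<Sum>(n, a, h)\<leftarrow>xs. grAV_act_family scM YM n a h d)
               \<in> grAM_low projV scM projM YM d))"

definition grAM_fin_generated ::
  "(nat \<Rightarrow> 'v \<Rightarrow> 'v) \<Rightarrow> (complex \<Rightarrow> 'm::ab_group_add \<Rightarrow> 'm) \<Rightarrow> (nat \<Rightarrow> 'm \<Rightarrow> 'm)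
     \<Rightarrow> ('v \<Rightarrow> int \<Rightarrow> 'm \<Rightarrow> 'm) \<Rightarrow> bool" where
  "grAM_fin_generated projV scM projM YM \<longleftrightarrow>
     (\<exists>S. finite S \<and> S \<subseteq> grAM_carrier projM \<and> grAM_generated_by projV scM projM YM S)"

text \<open>psi(w + C_2(M)) for w \<in> M: the sum over m of the class of the component w_m \<in> M(m)
in gr_m A(M); represented by the family of components.\<close>
definition psi :: "(nat \<Rightarrow> 'm \<Rightarrow> 'm) \<Rightarrow> 'm \<Rightarrow> nat \<Rightarrow> 'm" where
  "psi projM w = (\<lambda>d. projM d w)"

end

theory Submission
  imports Defs
begin

text \<open>Two instances of the Borcherds identity, the normal-ordering relation
(a_(-1) b)_(-1) x = a_(-1) b_(-1) x mod C_2(M) and the commutator formula, show that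
a_(-1) preserves the span of C_2(M) and of the vectors a_(-1) w (a \<in> V homogeneous,
w \<in> W); by strong generation this span is all of M.  Modulo A(M)_(d-1), the degree-d
component of a_(-1) w agrees with a * w_(d - wt a), since the other terms of Zhu's product
have lower degree; this is the action of the class of a on psi(w).  The degree-d component
of an element of C_2(M) lies in A(M)_(d-1): for a_(-2) y it is the leading term of an element
of O(M), and a_(-k-1) is a multiple of (L(-1) a)_(-k).  As every element of gr A(M) is
psi(v) for some v \<in> M, the classes psi(w), w \<in> W, generate gr A(M).\<close>

locale graded_vector_space =
  fixes sc :: "complex \<Rightarrow> 'a::ab_group_add \<Rightarrow> 'a"
    and proj :: "nat \<Rightarrow> 'a \<Rightarrow> 'a"
  assumes nat_graded: "nat_graded sc proj"
begin

sublocale vector_space sc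
  using nat_graded by (simp add: nat_graded_def)

lemma proj_hom: "module_hom sc sc (proj n)"
  using nat_graded by (simp add: nat_graded_def module_hom_iff_linear)

lemma proj_add [simp]: "proj n (x + y) = proj n x + proj n y"
  and proj_diff [simp]: "proj n (x - y) = proj n x - proj n y"
  and proj_scale [simp]: "proj n (sc r x) = sc r (proj n x)"
  and proj_zero [simp]: "proj n 0 = 0"
  and proj_sum: "proj n (\<Sum>j\<in>J. f j) = (\<Sum>j\<in>J. proj n (f j))"
  using module_hom.add[OF proj_hom] module_hom.diff[OF proj_hom] module_hom.scale[OF proj_hom]
    module_hom.zero[OF proj_hom] module_hom.sum[OF proj_hom] by simp_all

lemma finite_support: "finite {n. proj n v \<noteq> 0}"
  using nat_graded by (simp add: nat_graded_def)

lemma sum_components: "v = (\<Sum>n\<in>{n. proj n v \<noteq> 0}. proj n v)"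
  using nat_graded unfolding nat_graded_def by blast

lemma proj_proj: "proj m (proj n v) = (if m = n then proj n v else 0)"
  using nat_graded by (simp add: nat_graded_def)

lemma proj_in_hcomp: "proj n v \<in> hcomp proj n"
  by (simp add: hcomp_def proj_proj)

lemma hcomp_proj_self: "v \<in> hcomp proj n \<Longrightarrow> proj n v = v"
  by (simp add: hcomp_def)

lemma hcomp_proj_other: "v \<in> hcomp proj n \<Longrightarrow> m \<noteq> n \<Longrightarrow> proj m v = 0"
  unfolding hcomp_def using proj_proj[of m n v] by simp

lemma subspace_hcomp: "subspace (hcomp proj n)"
  by (rule subspaceI) (auto simp: hcomp_def)

lemma subspace_Flt: "subspace (Flt proj d)"
  by (rule subspaceI) (auto simp: Flt_def)

lemma Flt_Suc_diff_proj: "x \<in> Flt proj (Suc d) \<Longrightarrow> x - proj d x \<in> Flt proj d"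
  by (auto simp: Flt_def proj_proj le_Suc_eq)

lemma proj_sum_components:
  assumes "finite G" and "\<And>e. e \<notin> G \<Longrightarrow> proj e (g e) = 0"
  shows "proj d (\<Sum>e\<in>G. proj e (g e)) = proj d (g d)"
  using assms by (simp add: proj_sum proj_proj)

end

text \<open>The span of C2_gens is C_2(M), because a_(-k) for k \<ge> 2 is a multiple of
(L(-1)^(k-2) a)_(-2).\<close>
definition C2_gens :: "('v \<Rightarrow> int \<Rightarrow> 'm \<Rightarrow> 'm) \<Rightarrow> 'm set" where
  "C2_gens YM = {YM a (- int k) y | a y k. 2 \<le> k}"

definition minus1_gens ::
  "(nat \<Rightarrow> 'v \<Rightarrow> 'v) \<Rightarrow> ('v \<Rightarrow> int \<Rightarrow> 'm \<Rightarrow> 'm) \<Rightarrow> 'm set \<Rightarrow> 'm set" where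
  "minus1_gens projV YM W = {YM a (-1) w | a w n. a \<in> hcomp projV n \<and> w \<in> W}"

definition grAV_span ::
  "(nat \<Rightarrow> 'v \<Rightarrow> 'v) \<Rightarrow> (complex \<Rightarrow> 'm::ab_group_add \<Rightarrow> 'm) \<Rightarrow> (nat \<Rightarrow> 'm \<Rightarrow> 'm)
     \<Rightarrow> ('v \<Rightarrow> int \<Rightarrow> 'm \<Rightarrow> 'm) \<Rightarrow> (nat \<Rightarrow> 'm) set \<Rightarrow> (nat \<Rightarrow> 'm) set" where
  "grAV_span projV scM projM YM S = {g. \<exists>xs :: (nat \<times> 'v \<times> (nat \<Rightarrow> 'm)) list.
     (\<forall>(n, a, h)\<in>set xs. a \<in> hcomp projV n \<and> h \<in> S) \<and>
     (\<forall>d. g d - (\<Sum>(n, a, h)\<leftarrow>xs. grAV_act_family scM YM n a h d)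
            \<in> grAM_low projV scM projM YM d)}"

lemma grAM_generated_by_iff_subset_grAV_span:
  "grAM_generated_by projV scM projM YM S \<longleftrightarrow> grAM_carrier projM \<subseteq> grAV_span projV scM projM YM S"
  unfolding grAM_generated_by_def grAV_span_def by blast

locale graded_admissible_module =
  fixes scV :: "complex \<Rightarrow> 'v::ab_group_add \<Rightarrow> 'v"
    and projV :: "nat \<Rightarrow> 'v \<Rightarrow> 'v"
    and Y :: "'v \<Rightarrow> int \<Rightarrow> 'v \<Rightarrow> 'v"
    and vac :: 'v
    and scM :: "complex \<Rightarrow> 'm::ab_group_add \<Rightarrow> 'm"
    and projM :: "nat \<Rightarrow> 'm \<Rightarrow> 'm"
    and YM :: "'v \<Rightarrow> int \<Rightarrow> 'm \<Rightarrow> 'm"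
  assumes graded_V: "nat_graded scV projV"
    and admissible: "admissible_module scV projV Y vac scM projM YM"
begin

sublocale V: graded_vector_space scV projV
  by (rule graded_vector_space.intro[OF graded_V])

sublocale M: graded_vector_space scM projM
  using admissible by (simp add: graded_vector_space_def admissible_module_def)

abbreviation low :: "nat \<Rightarrow> 'm set" where
  "low d \<equiv> grAM_low projV scM projM YM d"

abbreviation act :: "nat \<Rightarrow> 'v \<Rightarrow> (nat \<Rightarrow> 'm) \<Rightarrow> nat \<Rightarrow> 'm" where
  "act \<equiv> grAV_act_family scM YM"

lemma mode_hom_left: "module_hom scV scM (\<lambda>a. YM a n w)"
  using admissible by (simp add: admissible_module_def module_hom_iff_linear)

lemma mode_hom_right: "module_hom scM scM (YM a n)"
  using admissible by (simp add: admissible_module_def module_hom_iff_linear)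

lemma mode_zero_left [simp]: "YM 0 n w = 0"
  and mode_zero_right [simp]: "YM a n 0 = 0"
  and mode_scale_left: "YM (scV r a) n w = scM r (YM a n w)"
  and mode_sum_left: "YM (\<Sum>j\<in>J. f j) n w = (\<Sum>j\<in>J. YM (f j) n w)"
  and mode_sum_right: "YM a n (\<Sum>j\<in>J. g j) = (\<Sum>j\<in>J. YM a n (g j))"
  using module_hom.zero[OF mode_hom_left] module_hom.zero[OF mode_hom_right]
    module_hom.scale[OF mode_hom_left] module_hom.sum[OF mode_hom_left]
    module_hom.sum[OF mode_hom_right] by simp_all

lemma mode_components_left: "YM a n w = (\<Sum>j\<in>{j. projV j a \<noteq> 0}. YM (projV j a) n w)"
  by (subst V.sum_components) (simp only: mode_sum_left)

lemma mode_components_right: "YM a n w = (\<Sum>i\<in>{i. projM i w \<noteq> 0}. YM a n (projM i w))"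
  by (subst M.sum_components) (simp only: mode_sum_right)

lemma vacuum_mode: "YM vac n w = (if n = -1 then w else 0)"
  using admissible by (simp add: admissible_module_def)

lemma borcherds_M: "borcherds scM Y YM"
  using admissible by (simp add: admissible_module_def)

lemma proj_mode:
  assumes "a \<in> hcomp projV n" and "w \<in> hcomp projM m"
  shows "projM D (YM a k w) = (if int m + int n - k - 1 = int D then YM a k w else 0)"
proof (cases "int m + int n - k - 1 < 0")
  case True
  then have "YM a k w = 0"
    using admissible assms by (auto simp: admissible_module_def)
  then show ?thesis by simp
next
  case False
  then have "YM a k w \<in> hcomp projM (nat (int m + int n - k - 1))"
    using admissible assms by (auto simp: admissible_module_def)
  then show ?thesis
    using False M.hcomp_proj_self M.hcomp_proj_other by (auto simp: nat_eq_iff)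
qed

lemma mode_in_hcomp:
  assumes "a \<in> hcomp projV n" and "w \<in> hcomp projM m" and "int m + int n - k - 1 = int D"
  shows "YM a k w \<in> hcomp projM D"
  using proj_mode[OF assms(1,2), of D k] assms(3) by (simp add: hcomp_def)

lemma mode_in_Flt:
  assumes "a \<in> hcomp projV n" and "w \<in> hcomp projM m" and "int m + int n - k - 1 < int D"
  shows "YM a k w \<in> Flt projM D"
  unfolding Flt_def using proj_mode[OF assms(1,2)] assms(3) by auto

lemma borcherds_commutator:
  "\<exists>N. \<forall>K\<ge>N. (\<Sum>i<K. scM (of_int p gchoose i) (YM (Y a (int i) b) (p + q - int i) x))
              = YM a p (YM b q x) - YM b q (YM a p x)"
proof -
  obtain N where N: "\<forall>K\<ge>N.
        (\<Sum>i<K. scM (of_int p gchoose i) (YM (Y a (0 + int i) b) (p + q - int i) x))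
      = (\<Sum>i<K. scM ((-1) ^ i * (of_int 0 gchoose i))
            (YM a (p + 0 - int i) (YM b (q + int i) x)
             - scM (sgn_int 0) (YM b (q + 0 - int i) (YM a (p + int i) x))))"
    using borcherds_M unfolding borcherds_def by blast
  show ?thesis
  proof (intro exI[of _ "Suc N"] allI impI)
    fix K assume "Suc N \<le> K"
    then obtain K' where K: "K = Suc K'" and "N \<le> K" by (cases K) auto
    have "(\<Sum>i<K. scM ((-1) ^ i * (of_int 0 gchoose i))
            (YM a (p + 0 - int i) (YM b (q + int i) x)
             - scM (sgn_int 0) (YM b (q + 0 - int i) (YM a (p + int i) x))))
         = YM a p (YM b q x) - YM b q (YM a p x)"
      unfolding K sum.lessThan_Suc_shift by (simp add: gbinomial_0_left sgn_int_def)
    with N \<open>N \<le> K\<close> show "(\<Sum>i<K. scM (of_int p gchoose i) (YM (Y a (int i) b) (p + q - int i) x))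
        = YM a p (YM b q x) - YM b q (YM a p x)" by simp
  qed
qed

lemma span_C2_gensI: "t \<le> -2 \<Longrightarrow> YM a t y \<in> M.span (C2_gens YM)"
  unfolding C2_gens_def
  by (rule M.span_base) (intro CollectI exI[of _ a] exI[of _ y] exI[of _ "nat (- t)"], simp)

lemma mode_minus1_C2_gen_in_span_C2:
  assumes "2 \<le> k"
  shows "YM a (-1) (YM b (- int k) y) \<in> M.span (C2_gens YM)"
proof -
  obtain N where N: "\<forall>K\<ge>N. (\<Sum>i<K. scM (of_int (-1) gchoose i) (YM (Y a (int i) b) (-1 + - int k - int i) y))
         = YM a (-1) (YM b (- int k) y) - YM b (- int k) (YM a (-1) y)"
    using borcherds_commutator by blast
  then have "YM a (-1) (YM b (- int k) y)
     = YM b (- int k) (YM a (-1) y)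
       + (\<Sum>i<N. scM (of_int (-1) gchoose i) (YM (Y a (int i) b) (-1 + - int k - int i) y))"
    by simp
  also have "\<dots> \<in> M.span (C2_gens YM)"
    using assms by (intro M.span_add M.span_sum M.span_scale span_C2_gensI) auto
  finally show ?thesis .
qed

text \<open>The Borcherds identity with p = 0, q = r = -1 expresses
(a_(-1) b)_(-1) x as a_(-1) b_(-1) x plus terms a_(-2-i) b_(-1+i) x and b_(-2-i) a_i x.\<close>
lemma normal_order_mod_C2:
  "YM a (-1) (YM b (-1) x) - YM (Y a (-1) b) (-1) x \<in> M.span (C2_gens YM)"
proof -
  define F where "F i = scM (of_int 0 gchoose i) (YM (Y a (-1 + int i) b) (0 + -1 - int i) x)"
    for i :: nat
  define G where "G i = scM ((-1) ^ i * (of_int (-1) gchoose i))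
            (YM a (0 + -1 - int i) (YM b (-1 + int i) x)
             - scM (sgn_int (-1)) (YM b (-1 + -1 - int i) (YM a (0 + int i) x)))"
    for i :: nat
  obtain N where N: "\<forall>K\<ge>N. (\<Sum>i<K. F i) = (\<Sum>i<K. G i)"
    using borcherds_M unfolding borcherds_def F_def G_def by blast
  have FG: "(\<Sum>i<Suc N. F i) = (\<Sum>i<Suc N. G i)"
    by (rule N[rule_format]) simp
  have F: "(\<Sum>i<Suc N. F i) = YM (Y a (-1) b) (-1) x"
    unfolding sum.lessThan_Suc_shift F_def by (simp add: gbinomial_0_left)
  have G0: "G 0 = YM a (-1) (YM b (-1) x) - scM (sgn_int (-1)) (YM b (-2) (YM a 0 x))"
    unfolding G_def by simp
  have G_Suc: "G (Suc i) \<in> M.span (C2_gens YM)" for i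
    unfolding G_def by (intro M.span_scale M.span_diff span_C2_gensI) auto
  have "YM a (-1) (YM b (-1) x) - YM (Y a (-1) b) (-1) x
        = scM (sgn_int (-1)) (YM b (-2) (YM a 0 x)) - (\<Sum>i<N. G (Suc i))"
  proof -
    have "YM (Y a (-1) b) (-1) x = G 0 + (\<Sum>i<N. G (Suc i))"
      using FG unfolding F by (simp only: sum.lessThan_Suc_shift)
    then show ?thesis unfolding G0 by (simp add: algebra_simps)
  qed
  also have "\<dots> \<in> M.span (C2_gens YM)"
    by (intro M.span_diff M.span_scale M.span_sum span_C2_gensI G_Suc) auto
  finally show ?thesis .
qed

lemma span_minus1_C2_gens_closed:
  assumes "x \<in> M.span (minus1_gens projV YM W \<union> C2_gens YM)"
  shows "YM a (-1) x \<in> M.span (minus1_gens projV YM W \<union> C2_gens YM)"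
proof -
  let ?S = "M.span (minus1_gens projV YM W \<union> C2_gens YM)"
  have C2_S: "M.span (C2_gens YM) \<subseteq> ?S"
    by (rule M.span_mono) blast
  have "x \<in> {x. YM a (-1) x \<in> ?S}"
  proof (rule M.span_subspace_induct[OF assms])
    show "M.subspace {x. YM a (-1) x \<in> ?S}"
      by (rule module_hom.subspace_linear_preimage[OF mode_hom_right M.subspace_span])
    fix x assume "x \<in> minus1_gens projV YM W \<union> C2_gens YM"
    then consider (minus1) b w n where "x = YM b (-1) w" "b \<in> hcomp projV n" "w \<in> W"
      | (C2) b y k where "x = YM b (- int k) y" "2 \<le> k"
      unfolding minus1_gens_def C2_gens_def by blast
    then have "YM a (-1) x \<in> ?S"
    proof cases
      case minus1
      have "YM (Y a (-1) b) (-1) w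
          = (\<Sum>j\<in>{j. projV j (Y a (-1) b) \<noteq> 0}. YM (projV j (Y a (-1) b)) (-1) w)"
        by (rule mode_components_left)
      also have "\<dots> \<in> ?S"
        using V.proj_in_hcomp minus1(3) unfolding minus1_gens_def
        by (intro M.span_sum M.span_base UnI1) blast
      finally have "YM (Y a (-1) b) (-1) w \<in> ?S" .
      moreover have "YM a (-1) x - YM (Y a (-1) b) (-1) w \<in> ?S"
        unfolding minus1(1) using normal_order_mod_C2 C2_S by blast
      ultimately show ?thesis
        using M.span_add by fastforce
    next
      case C2
      then show ?thesis
        using mode_minus1_C2_gen_in_span_C2 C2_S by blast
    qed
    then show "x \<in> {x. YM a (-1) x \<in> ?S}" by simp
  qed
  then show ?thesis by simp
qed

lemma subspace_low: "M.subspace (low d)"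
  unfolding grAM_low_def O_M_def by (rule M.subspace_sums[OF M.subspace_Flt M.subspace_span])

lemma Flt_subset_low: "x \<in> Flt projM d \<Longrightarrow> x \<in> low d"
  unfolding grAM_low_def using M.subspace_0[OF M.subspace_span] by (force simp: O_M_def)

lemma O_M_subset_low: "x \<in> O_M projV scM YM \<Longrightarrow> x \<in> low d"
  unfolding grAM_low_def using M.subspace_0[OF M.subspace_Flt] by force

lemma zhu_left_minus_mode_in_Flt:
  assumes "a \<in> hcomp projV n" and "y \<in> hcomp projM m"
  shows "zhu_left scM YM n a y - YM a (-1) y \<in> Flt projM (m + n)"
proof -
  have "zhu_left scM YM n a y - YM a (-1) y
      = (\<Sum>i<n. scM (of_nat (n choose Suc i)) (YM a (int (Suc i) - 1) y))"
    unfolding zhu_left_def sum.atMost_shift by simp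
  also have "\<dots> \<in> Flt projM (m + n)"
    by (intro M.subspace_sum[OF M.subspace_Flt] M.subspace_scale[OF M.subspace_Flt]
        mode_in_Flt[OF assms]) simp
  finally show ?thesis .
qed

lemma proj_mode_minus1:
  assumes "a \<in> hcomp projV n"
  shows "projM d (YM a (-1) w) = (if n \<le> d then YM a (-1) (projM (d - n) w) else 0)"
proof -
  have "projM d (YM a (-1) w) = (\<Sum>i\<in>{i. projM i w \<noteq> 0}. projM d (YM a (-1) (projM i w)))"
    by (subst mode_components_right) (simp only: M.proj_sum)
  also have "\<dots> = (\<Sum>i\<in>{i. projM i w \<noteq> 0}.
                     if n \<le> d \<and> i = d - n then YM a (-1) (projM (d - n) w) else 0)"
    by (intro sum.cong refl, subst proj_mode[OF assms M.proj_in_hcomp]) auto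
  also have "\<dots> = (if n \<le> d then YM a (-1) (projM (d - n) w) else 0)"
  proof (cases "n \<le> d")
    case True
    have "(\<Sum>i\<in>{i. projM i w \<noteq> 0}. if i = d - n then YM a (-1) (projM (d - n) w) else 0)
        = YM a (-1) (projM (d - n) w)"
      by (subst sum.delta[OF M.finite_support]) auto
    with True show ?thesis by simp
  qed simp
  finally show ?thesis .
qed

lemma proj_mode_in_low:
  assumes "a \<in> hcomp projV n" and "w \<in> hcomp projM m"
    and "int m + int n - k - 1 = int d \<Longrightarrow> YM a k w \<in> low d"
  shows "projM d (YM a k w) \<in> low d"
  using assms proj_mode[OF assms(1,2)] M.subspace_0[OF subspace_low] by auto

lemma proj_mode_minus1_diff_act_in_low:
  assumes "a \<in> hcomp projV n"
  shows "projM d (YM a (-1) w) - act n a (psi projM w) d \<in> low d"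
proof (cases "n \<le> d")
  case True
  have "zhu_left scM YM n a (projM (d - n) w) - YM a (-1) (projM (d - n) w) \<in> Flt projM d"
    using zhu_left_minus_mode_in_Flt[OF assms M.proj_in_hcomp, of "d - n" w] True by simp
  then have "- (zhu_left scM YM n a (projM (d - n) w) - YM a (-1) (projM (d - n) w)) \<in> low d"
    by (intro Flt_subset_low M.subspace_neg[OF M.subspace_Flt])
  then show ?thesis
    using True by (simp add: proj_mode_minus1[OF assms] grAV_act_family_def psi_def)
next
  case False
  then show ?thesis
    using M.subspace_0[OF subspace_low]
    by (simp add: proj_mode_minus1[OF assms] grAV_act_family_def)
qed

abbreviation gr_span :: "(nat \<Rightarrow> 'm) set \<Rightarrow> (nat \<Rightarrow> 'm) set" where
  "gr_span S \<equiv> grAV_span projV scM projM YM S"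

lemma act_scale: "act n (scV r a) h d = scM r (act n a h d)"
  by (simp add: grAV_act_family_def zhu_left_def mode_scale_left M.scale_sum_right mult.commute)

lemma gr_span_act: "a \<in> hcomp projV n \<Longrightarrow> h \<in> S \<Longrightarrow> act n a h \<in> gr_span S"
  unfolding grAV_span_def
  by (intro CollectI exI[of _ "[(n, a, h)]"]) (simp add: M.subspace_0[OF subspace_low])

lemma gr_span_zero: "(\<lambda>d. 0) \<in> gr_span S"
  unfolding grAV_span_def
  by (intro CollectI exI[of _ "[]"]) (simp add: M.subspace_0[OF subspace_low])

lemma gr_span_equiv:
  assumes "g \<in> gr_span S" and "\<And>d. g' d - g d \<in> low d"
  shows "g' \<in> gr_span S"
proof -
  obtain xs where xs: "\<forall>(n, a, h)\<in>set xs. a \<in> hcomp projV n \<and> h \<in> S"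
    and g: "\<And>d. g d - (\<Sum>(n, a, h)\<leftarrow>xs. act n a h d) \<in> low d"
    using assms(1) unfolding grAV_span_def by blast
  have "g' d - (\<Sum>(n, a, h)\<leftarrow>xs. act n a h d)
      = (g' d - g d) + (g d - (\<Sum>(n, a, h)\<leftarrow>xs. act n a h d))" for d
    by simp
  then have "g' d - (\<Sum>(n, a, h)\<leftarrow>xs. act n a h d) \<in> low d" for d
    using M.subspace_add[OF subspace_low assms(2) g] by simp
  with xs show ?thesis unfolding grAV_span_def by blast
qed

lemma gr_span_add:
  assumes "g \<in> gr_span S" and "g' \<in> gr_span S"
  shows "(\<lambda>d. g d + g' d) \<in> gr_span S"
proof -
  obtain xs where xs: "\<forall>(n, a, h)\<in>set xs. a \<in> hcomp projV n \<and> h \<in> S"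
    and g: "\<And>d. g d - (\<Sum>(n, a, h)\<leftarrow>xs. act n a h d) \<in> low d"
    using assms(1) unfolding grAV_span_def by blast
  obtain ys where ys: "\<forall>(n, a, h)\<in>set ys. a \<in> hcomp projV n \<and> h \<in> S"
    and g': "\<And>d. g' d - (\<Sum>(n, a, h)\<leftarrow>ys. act n a h d) \<in> low d"
    using assms(2) unfolding grAV_span_def by blast
  have "g d + g' d - (\<Sum>(n, a, h)\<leftarrow>xs @ ys. act n a h d)
      = (g d - (\<Sum>(n, a, h)\<leftarrow>xs. act n a h d)) + (g' d - (\<Sum>(n, a, h)\<leftarrow>ys. act n a h d))" for d
    by simp
  then have "g d + g' d - (\<Sum>(n, a, h)\<leftarrow>xs @ ys. act n a h d) \<in> low d" for d
    using M.subspace_add[OF subspace_low g g'] by metis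
  moreover have "\<forall>(n, a, h)\<in>set (xs @ ys). a \<in> hcomp projV n \<and> h \<in> S"
    using xs ys by auto
  ultimately show ?thesis unfolding grAV_span_def by blast
qed

lemma gr_span_scale:
  assumes "g \<in> gr_span S"
  shows "(\<lambda>d. scM r (g d)) \<in> gr_span S"
proof -
  obtain xs where xs: "\<forall>(n, a, h)\<in>set xs. a \<in> hcomp projV n \<and> h \<in> S"
    and g: "\<And>d. g d - (\<Sum>(n, a, h)\<leftarrow>xs. act n a h d) \<in> low d"
    using assms unfolding grAV_span_def by blast
  define rxs where "rxs = map (\<lambda>(n, a, h). (n, scV r a, h)) xs"
  have "(\<Sum>(n, a, h)\<leftarrow>rxs. act n a h d) = scM r (\<Sum>(n, a, h)\<leftarrow>xs. act n a h d)" for d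
    unfolding rxs_def by (induction xs) (auto simp: act_scale M.scale_right_distrib)
  then have "scM r (g d) - (\<Sum>(n, a, h)\<leftarrow>rxs. act n a h d) \<in> low d" for d
    using M.subspace_scale[OF subspace_low g, of r d] by (simp add: M.scale_right_diff_distrib)
  moreover have "\<forall>(n, a, h)\<in>set rxs. a \<in> hcomp projV n \<and> h \<in> S"
    using xs V.subspace_scale[OF V.subspace_hcomp] by (auto simp: rxs_def)
  ultimately show ?thesis unfolding grAV_span_def by blast
qed

lemma subspace_psi_preimage_gr_span: "M.subspace {v. psi projM v \<in> gr_span S}"
  using gr_span_zero gr_span_add gr_span_scale
  by (intro M.subspaceI) (simp_all add: psi_def)

end

locale cft_admissible_module = graded_admissible_module scV projV Y vac scM projM YM
  for scV :: "complex \<Rightarrow> 'v::ab_group_add \<Rightarrow> 'v"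
    and projV :: "nat \<Rightarrow> 'v \<Rightarrow> 'v"
    and Y :: "'v \<Rightarrow> int \<Rightarrow> 'v \<Rightarrow> 'v"
    and vac :: 'v
    and scM :: "complex \<Rightarrow> 'm::ab_group_add \<Rightarrow> 'm"
    and projM :: "nat \<Rightarrow> 'm \<Rightarrow> 'm"
    and YM :: "'v \<Rightarrow> int \<Rightarrow> 'm \<Rightarrow> 'm" +
  fixes om :: 'v and c :: complex
  assumes VOA: "VOA scV projV Y vac om c"
    and CFT: "CFT_type scV projV vac"
begin

lemma vac_in_hcomp_0: "vac \<in> hcomp projV 0"
  using CFT V.span_base[of vac "{vac}"] by (simp add: CFT_type_def)

text \<open>Since a_(-2) vac = L(-1) a, this is the translation property (L(-1) a)_p = -p a_(p-1);
it follows from the Borcherds identity for a and vac with q = 0, r = -2.\<close>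
lemma derivative_mode: "YM (Y a (-2) vac) p x = scM (- of_int p) (YM a (p - 1) x)"
proof -
  define F where "F i = scM (of_int p gchoose i) (YM (Y a (-2 + int i) vac) (p + 0 - int i) x)"
    for i :: nat
  define G where "G i = scM ((-1) ^ i * (of_int (-2) gchoose i))
            (YM a (p + -2 - int i) (YM vac (0 + int i) x)
             - scM (sgn_int (-2)) (YM vac (0 + -2 - int i) (YM a (p + int i) x)))"
    for i :: nat
  obtain N where N: "\<forall>K\<ge>N. (\<Sum>i<K. F i) = (\<Sum>i<K. G i)"
    using borcherds_M unfolding borcherds_def F_def G_def by blast
  have "(\<Sum>i<Suc (Suc N). F i) = (\<Sum>i<Suc (Suc N). G i)"
    by (rule N[rule_format]) simp
  moreover have "G i = 0" for i
    unfolding G_def by (simp add: vacuum_mode)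
  ultimately have F_sum: "(\<Sum>i<Suc (Suc N). F i) = 0"
    by simp
  have "F (Suc (Suc i)) = 0" for i
    using VOA by (simp add: F_def VOA_def)
  then have "(\<Sum>i<Suc (Suc N). F i) = F 0 + F 1"
    by (simp only: sum.lessThan_Suc_shift) simp
  also have "\<dots> = YM (Y a (-2) vac) p x + scM (of_int p) (YM a (p - 1) x)"
    using VOA by (simp add: F_def VOA_def)
  finally show ?thesis
    using F_sum M.scale_minus_left by (simp add: eq_neg_iff_add_eq_0)
qed

lemma mode_minus2_in_low:
  assumes a: "a \<in> hcomp projV n" and y: "y \<in> hcomp projM m"
  shows "YM a (-2) y \<in> low (m + n + 1)"
proof -
  define r where "r = (\<Sum>i<n. scM (of_nat (n choose Suc i)) (YM a (int (Suc i) - 2) y))"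
  have "(\<Sum>i\<le>n. scM (of_nat (n choose i)) (YM a (int i - 2) y)) \<in> O_M projV scM YM"
    unfolding O_M_def using a by (intro M.span_base) blast
  moreover have "(\<Sum>i\<le>n. scM (of_nat (n choose i)) (YM a (int i - 2) y)) = YM a (-2) y + r"
    unfolding r_def sum.atMost_shift by simp
  ultimately have "YM a (-2) y + r \<in> low (m + n + 1)"
    by (simp add: O_M_subset_low)
  moreover have "r \<in> low (m + n + 1)"
    unfolding r_def
    by (intro Flt_subset_low M.subspace_sum[OF M.subspace_Flt] M.subspace_scale[OF M.subspace_Flt]
        mode_in_Flt[OF a y]) simp
  ultimately show ?thesis
    using M.subspace_diff[OF subspace_low] by fastforce
qed

text \<open>By the translation property a_(-k-1) is a multiple of (a_(-2) vac)_(-k), and the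
component of a_(-2) vac that contributes in the relevant degree has weight n + 1.\<close>
lemma C2_mode_in_low:
  assumes "2 \<le> k" and "a \<in> hcomp projV n" and y: "y \<in> hcomp projM m"
  shows "YM a (- int k) y \<in> low (m + n + k - 1)"
  using assms(1,2)
proof (induction k arbitrary: a n rule: nat_induct_at_least)
  case base
  then show ?case using mode_minus2_in_low[OF _ y] by simp
next
  case (Suc k)
  define D where "D = m + n + k"
  define a' where "a' = Y a (-2) vac"
  have "YM a' (- int k) y = scM (of_nat k) (YM a (- int (Suc k)) y)"
    unfolding a'_def derivative_mode
    using arg_cong[of "- int k - 1" "- int (Suc k)" "\<lambda>t. YM a t y"] by simp
  then have a_mode: "YM a (- int (Suc k)) y = scM (1 / of_nat k) (YM a' (- int k) y)"
    using Suc.hyps by (simp add: M.scale_scale)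
  have "YM a (- int (Suc k)) y \<in> hcomp projM D"
    unfolding D_def by (rule mode_in_hcomp[OF Suc.prems y]) simp
  then have "YM a (- int (Suc k)) y = projM D (YM a (- int (Suc k)) y)"
    by (simp add: M.hcomp_proj_self)
  also have "\<dots> = scM (1 / of_nat k) (\<Sum>j\<in>{j. projV j a' \<noteq> 0}. projM D (YM (projV j a') (- int k) y))"
    by (subst a_mode, subst mode_components_left) (simp only: M.proj_scale M.proj_sum)
  also have "\<dots> \<in> low D"
  proof (intro M.subspace_scale[OF subspace_low] M.subspace_sum[OF subspace_low]
      proj_mode_in_low[OF V.proj_in_hcomp y])
    fix j assume "int m + int j - - int k - 1 = int D"
    then have "j = n + 1" and "m + j + k - 1 = D"
      using Suc.hyps by (auto simp: D_def)
    then show "YM (projV j a') (- int k) y \<in> low D"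
      using Suc.IH[OF V.proj_in_hcomp] by blast
  qed
  finally show ?case by (simp add: D_def)
qed

lemma proj_span_C2_in_low:
  assumes "x \<in> M.span (C2_gens YM)"
  shows "projM d x \<in> low d"
proof (rule M.span_subspace_induct[OF assms, of "{x. projM d x \<in> low d}", simplified])
  show "M.subspace {x. projM d x \<in> low d}"
    by (rule module_hom.subspace_linear_preimage[OF M.proj_hom subspace_low])
next
  fix x assume "x \<in> C2_gens YM"
  then obtain a y k where x: "x = YM a (- int k) y" and k: "2 \<le> k"
    unfolding C2_gens_def by blast
  have "projM d x = (\<Sum>j\<in>{j. projV j a \<noteq> 0}. \<Sum>i\<in>{i. projM i y \<noteq> 0}.
                        projM d (YM (projV j a) (- int k) (projM i y)))"
    unfolding x by (subst mode_components_left, subst mode_components_right) (simp only: M.proj_sum)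
  also have "\<dots> \<in> low d"
  proof (intro M.subspace_sum[OF subspace_low]
      proj_mode_in_low[OF V.proj_in_hcomp M.proj_in_hcomp])
    fix i j assume "int i + int j - - int k - 1 = int d"
    then have "d = i + j + k - 1" using k by linarith
    then show "YM (projV j a) (- int k) (projM i y) \<in> low d"
      using C2_mode_in_low[OF k V.proj_in_hcomp M.proj_in_hcomp] by simp
  qed
  finally show "projM d x \<in> low d" .
qed

lemma sgen_set_subset_span:
  "sgen_set projV YM W \<subseteq> M.span (minus1_gens projV YM W \<union> C2_gens YM)"
proof
  fix v assume "v \<in> sgen_set projV YM W"
  then show "v \<in> M.span (minus1_gens projV YM W \<union> C2_gens YM)"
  proof (induction rule: sgen_set.induct)
    case (base w)
    then have "YM vac (-1) w \<in> minus1_gens projV YM W"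
      unfolding minus1_gens_def using vac_in_hcomp_0 by blast
    then show ?case
      by (simp add: vacuum_mode M.span_base)
  next
    case (step v n a k)
    show ?case
    proof (cases "k = 1")
      case True
      then show ?thesis using span_minus1_C2_gens_closed[OF step.IH] by simp
    next
      case False
      then have "YM a (- int k) v \<in> C2_gens YM"
        using step.hyps unfolding C2_gens_def
        by (intro CollectI exI[of _ a] exI[of _ v] exI[of _ k]) simp
      then show ?thesis by (simp add: M.span_base)
    qed
  qed
qed

lemma span_subset_psi_preimage_gr_span:
  "M.span (minus1_gens projV YM W \<union> C2_gens YM) \<subseteq> {v. psi projM v \<in> gr_span (psi projM ` W)}"
proof (rule M.span_minimal[OF Un_least subspace_psi_preimage_gr_span]; rule subsetI)
  fix x assume "x \<in> minus1_gens projV YM W"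
  then obtain a w n where x: "x = YM a (-1) w" and "a \<in> hcomp projV n" and "w \<in> W"
    unfolding minus1_gens_def by blast
  then show "x \<in> {v. psi projM v \<in> gr_span (psi projM ` W)}"
    using gr_span_equiv[OF gr_span_act[of a n "psi projM w"]] proj_mode_minus1_diff_act_in_low
    by (simp add: psi_def)
next
  fix x assume "x \<in> C2_gens YM"
  then show "x \<in> {v. psi projM v \<in> gr_span (psi projM ` W)}"
    using gr_span_equiv[OF gr_span_zero] proj_span_C2_in_low M.span_base
    by (simp add: psi_def)
qed

lemma psi_in_grAM_carrier: "psi projM w \<in> grAM_carrier projM"
  unfolding grAM_carrier_def psi_def Flt_def
  using M.finite_support[of w] by (auto simp: M.proj_proj)

lemma grAM_carrier_diff_psi_in_Flt:
  assumes "g \<in> grAM_carrier projM"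
  shows "g d - psi projM (\<Sum>e\<in>{e. g e \<noteq> 0}. projM e (g e)) d \<in> Flt projM d"
proof -
  have "finite {e. g e \<noteq> 0}" and "g d \<in> Flt projM (Suc d)"
    using assms by (auto simp: grAM_carrier_def)
  then show ?thesis
    unfolding psi_def by (subst M.proj_sum_components) (auto intro: M.Flt_Suc_diff_proj)
qed

lemma grAM_generated_by_psi:
  assumes "strongly_generated projV scM YM W"
  shows "grAM_generated_by projV scM projM YM (psi projM ` W)"
  unfolding grAM_generated_by_iff_subset_grAV_span
proof
  fix g assume g: "g \<in> grAM_carrier projM"
  define v where "v = (\<Sum>e\<in>{e. g e \<noteq> 0}. projM e (g e))"
  have "v \<in> M.span (sgen_set projV YM W)"
    using assms by (simp add: strongly_generated_def)
  then have "psi projM v \<in> gr_span (psi projM ` W)"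
    using M.span_minimal[OF sgen_set_subset_span M.subspace_span] span_subset_psi_preimage_gr_span
    by blast
  then show "g \<in> gr_span (psi projM ` W)"
    using gr_span_equiv Flt_subset_low grAM_carrier_diff_psi_in_Flt[OF g] unfolding v_def by blast
qed

end

theorem proposition4p7:
  fixes scV :: "complex \<Rightarrow> 'v::ab_group_add \<Rightarrow> 'v"
    and projV :: "nat \<Rightarrow> 'v \<Rightarrow> 'v"
    and Y :: "'v \<Rightarrow> int \<Rightarrow> 'v \<Rightarrow> 'v"
    and vac om :: 'v and c :: complex
    and scM :: "complex \<Rightarrow> 'm::ab_group_add \<Rightarrow> 'm"
    and projM :: "nat \<Rightarrow> 'm \<Rightarrow> 'm"
    and YM :: "'v \<Rightarrow> int \<Rightarrow> 'm \<Rightarrow> 'm"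
    and W :: "'m set"
  assumes "VOA scV projV Y vac om c"
    and "CFT_type scV projV vac"
    and "admissible_module scV projV Y vac scM projM YM"
    and "strongly_generated projV scM YM W"
  shows "grAM_generated_by projV scM projM YM (psi projM ` W)
         \<and> (strongly_fin_generated projV scM YM \<longrightarrow> grAM_fin_generated projV scM projM YM)"
proof -
  interpret cft_admissible_module scV projV Y vac scM projM YM om c
    using assms(1-3) by unfold_locales (simp_all add: VOA_def)
  have "grAM_fin_generated projV scM projM YM"
    if "finite W'" and "strongly_generated projV scM YM W'" for W'
    unfolding grAM_fin_generated_def
    using that grAM_generated_by_psi psi_in_grAM_carrier by blast
  then show ?thesis
    using assms(4) grAM_generated_by_psi by (auto simp: strongly_fin_generated_def)
qed

end
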